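(* Let $S$ be a finite set, $f:S\to\mathbb{R}$ a fitness function to be maximized, $S_{\mathrm{opt}}$ the set of maximizers of $f$ and $S_{\mathrm{non}}=S\setminus S_{\mathrm{opt}}$ (assumed nonempty). Let $s1,\dots,s\kappa$ be mutation operators on $S$ that are mutually complementary on $f$, i.e., writing $\rho_{\min}=\min\{\rho(\mathbf{T}_{s1}),\dots,\rho(\mathbf{T}_{s\kappa})\}$: for every $x\in S_{\mathrm{non}}$ and every $sl\in\{s1,\dots,s\kappa\}$ with $P_{sl}(x,x)\ge\rho_{\min}$, there exists $sk\neq sl$ with $P_{sk}(x,x)<\rho_{\min}$. Then there exists a strategy probability distribution $\mathbf{q}$ over $\{s1,\dots,s\kappa\}$ such that the homogeneous mixed strategy (1+1) EA with distribution $\mathbf{q}$ satisfies, for every $k=1,\dots,\kappa$, $R(\mathbf{T}_{\mathbf{q}})>R(\mathbf{T}_{sk})$ and $T(\mathbf{T}_{\mathbf{q}})<T(\mathbf{T}_{sk})$; i.e. its asymptotic convergence rate is larger and its asymptotic hitting time is shorter than those of any pure strategy EA using one of these mutation operators.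
   Context: A mutation operator $s$ on the finite set $S$ is a stochastic matrix $\mathbf{P}_{m,s}=[P_{m,s}(x,y)]_{x,y\in S}$ (probability that mutating $x$ yields $y$). Strict elitist selection between parent $x$ and offspring $y$ keeps $y$ if $f(y)>f(x)$ and keeps $x$ otherwise. The pure strategy (1+1) EA EA($s$) repeatedly mutates the current individual by $s$ and applies strict elitist selection; it is a homogeneous Markov chain on $S$ with transition probabilities $P_s(x,y)=P_{m,s}(x,y)$ if $f(y)>f(x)$, $P_s(x,y)=0$ if $y\neq x$ and $f(y)\le f(x)$, and $P_s(x,x)=1-\sum_{y:\,f(y)>f(x)}P_{m,s}(x,y)$. A (state-dependent) strategy probability distribution over operators $s1,\dots,s\kappa$ is a map $x\mapsto \mathbf{q}(x)=(q_{s1}(x),\dots,q_{s\kappa}(x))$ with $q_{sk}(x)\in[0,1]$ and $\sum_k q_{sk}(x)=1$. The homogeneous mixed strategy (1+1) EA with distribution $\mathbf{q}$ at each generation, with current individual $x$, chooses operator $sk$ with probability $q_{sk}(x)$, mutates $x$ by it, and applies strict elitist selection; its transition matrix is $P_{\mathbf{q}}(x,y)=\sum_{k}q_{sk}(x)P_{sk}(x,y)$. For such an EA with transition matrix $\mathbf{P}$, let $\mathbf{T}$ denote the submatrix $[P(x,y)]_{x,y\in S_{\mathrm{non}}}$ and $\rho(\mathbf{T})$ its spectral radius. The asymptotic convergence rate is $R(\mathbf{T})=-\ln\rho(\mathbf{T})$ (with $-\ln 0=+\infty$). The asymptotic hitting time is $T(\mathbf{T})=\rho((\mathbf{I}-\mathbf{T})^{-1})$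 if $\rho(\mathbf{T})<1$ and $T(\mathbf{T})=+\infty$ if $\rho(\mathbf{T})=1$. Subscripts $\mathbf{q}$ and $sk$ indicate the matrices of the mixed strategy EA and of the pure strategy EA($sk$), respectively. *)

theory Defs
  imports Complex_Main "HOL-Library.Extended_Real"
begin

text \<open>The search space S is the finite type 'a (S = UNIV). Matrices over S are
functions 'a \<Rightarrow> 'a \<Rightarrow> real. Mutation operators are indexed by k < \<kappa>.\<close>

definition S_opt :: "('a \<Rightarrow> real) \<Rightarrow> 'a set" where
  "S_opt f = {x. \<forall>y. f y \<le> f x}"

definition S_non :: "('a \<Rightarrow> real) \<Rightarrow> 'a set" where
  "S_non f = UNIV - S_opt f"

definition stochastic :: "('a::finite \<Rightarrow> 'a \<Rightarrow> real) \<Rightarrow> bool" where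
  "stochastic P \<longleftrightarrow> (\<forall>x y. 0 \<le> P x y) \<and> (\<forall>x. (\<Sum>y\<in>UNIV. P x y) = 1)"

definition ea_trans :: "('a::finite \<Rightarrow> real) \<Rightarrow> ('a \<Rightarrow> 'a \<Rightarrow> real) \<Rightarrow> 'a \<Rightarrow> 'a \<Rightarrow> real" where
  "ea_trans f Pm x y =
     (if f y > f x then Pm x y
      else if y = x then 1 - (\<Sum>z\<in>{z. f z > f x}. Pm x z)
      else 0)"

definition strategy_distribution :: "nat \<Rightarrow> ('a \<Rightarrow> nat \<Rightarrow> real) \<Rightarrow> bool" where
  "strategy_distribution \<kappa> q \<longleftrightarrow>
     (\<forall>x k. k < \<kappa> \<longrightarrow> 0 \<le> q x k \<and> q x k \<le> 1) \<and> (\<forall>x. (\<Sum>k<\<kappa>. q x k) = 1)"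

definition mixed_trans :: "('a::finite \<Rightarrow> real) \<Rightarrow> nat \<Rightarrow> (nat \<Rightarrow> 'a \<Rightarrow> 'a \<Rightarrow> real)
    \<Rightarrow> ('a \<Rightarrow> nat \<Rightarrow> real) \<Rightarrow> 'a \<Rightarrow> 'a \<Rightarrow> real" where
  "mixed_trans f \<kappa> Pm q x y = (\<Sum>k<\<kappa>. q x k * ea_trans f (Pm k) x y)"

definition eigenvalues_on :: "'a set \<Rightarrow> ('a \<Rightarrow> 'a \<Rightarrow> real) \<Rightarrow> complex set" where
  "eigenvalues_on A M = {c. \<exists>v :: 'a \<Rightarrow> complex. (\<exists>i\<in>A. v i \<noteq> 0) \<and>
      (\<forall>i\<in>A. (\<Sum>j\<in>A. complex_of_real (M i j) * v j) = c * v i)}"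

definition spectral_radius_on :: "'a set \<Rightarrow> ('a \<Rightarrow> 'a \<Rightarrow> real) \<Rightarrow> real" where
  "spectral_radius_on A M = Max (cmod ` eigenvalues_on A M)"

definition inv_I_minus_on :: "'a set \<Rightarrow> ('a \<Rightarrow> 'a \<Rightarrow> real) \<Rightarrow> 'a \<Rightarrow> 'a \<Rightarrow> real" where
  "inv_I_minus_on A M = (SOME N. \<forall>i\<in>A. \<forall>j\<in>A.
      (\<Sum>l\<in>A. ((if i = l then 1 else 0) - M i l) * N l j) = (if i = j then 1 else 0))"

definition asym_rate :: "('a \<Rightarrow> real) \<Rightarrow> ('a \<Rightarrow> 'a \<Rightarrow> real) \<Rightarrow> ereal" where
  "asym_rate f P =
     (let r = spectral_radius_on (S_non f) P in if r = 0 then \<infinity> else ereal (- ln r))"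

definition asym_hitting_time :: "('a \<Rightarrow> real) \<Rightarrow> ('a \<Rightarrow> 'a \<Rightarrow> real) \<Rightarrow> ereal" where
  "asym_hitting_time f P =
     (if spectral_radius_on (S_non f) P < 1
      then ereal (spectral_radius_on (S_non f) (inv_I_minus_on (S_non f) P))
      else \<infinity>)"

end

theory Submission
  imports Defs
begin

text \<open>
  Strict elitist selection only ever moves to strictly fitter states, so the transition matrix of
  any elitist (1+1) EA, restricted to the non-optimal states, becomes triangular once the states are
  listed by increasing fitness. Its eigenvalues are then its self-loop probabilities \<open>P(x,x)\<close>, so
  \<open>\<rho>(T) = max P(x,x)\<close> and \<open>\<rho>((I - T)\<^sup>-\<^sup>1) = 1 / (1 - \<rho>(T))\<close>: both the convergence rate and the
  hitting time improve strictly with \<open>\<rho>(T)\<close>. Complementarity yields in each non-optimal state \<open>x\<close>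
  an operator with \<open>P(x,x) < \<rho>\<^sub>m\<^sub>i\<^sub>n\<close>; the strategy that always applies that operator at \<open>x\<close>
  has spectral radius below \<open>\<rho>\<^sub>m\<^sub>i\<^sub>n\<close>, hence below that of every pure strategy.
\<close>

\<comment> \<open>\<open>M\<close> is upper triangular once \<open>A\<close> is ordered by increasing \<open>g\<close>.\<close>
definition triangular_on :: "'a set \<Rightarrow> ('a \<Rightarrow> real) \<Rightarrow> ('a \<Rightarrow> 'a \<Rightarrow> real) \<Rightarrow> bool" where
  "triangular_on A g M \<longleftrightarrow> (\<forall>i\<in>A. \<forall>j\<in>A. i \<noteq> j \<longrightarrow> M i j \<noteq> 0 \<longrightarrow> g i < g j)"

lemma triangular_on_subset: "triangular_on A g M \<Longrightarrow> B \<subseteq> A \<Longrightarrow> triangular_on B g M"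
  unfolding triangular_on_def by blast

lemma triangular_on_solvable:
  fixes M :: "'a \<Rightarrow> 'a \<Rightarrow> real"
  assumes "finite A" "triangular_on A g M" "\<forall>i\<in>A. d i \<noteq> 0"
  shows "\<exists>x. \<forall>i\<in>A. d i * x i - (\<Sum>l\<in>A-{i}. M i l * x l) = b i"
  using assms
proof (induction "card A" arbitrary: A rule: less_induct)
  case less
  show ?case
  proof (cases "A = {}")
    case False
    obtain m where m: "m \<in> A" "\<And>j. j \<in> A \<Longrightarrow> g m \<le> g j"
      using ex_is_arg_min_if_finite[OF less.prems(1) False, of g]
      unfolding is_arg_min_linorder by blast
    define A' where "A' = A - {m}"
    have "card A' < card A"
      unfolding A'_def using m(1) less.prems(1) by (meson card_Diff1_less)
    moreover have "finite A'" "triangular_on A' g M" "\<forall>i\<in>A'. d i \<noteq> 0"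
      using less.prems triangular_on_subset[of A g M A'] unfolding A'_def by auto
    ultimately obtain x' where x': "\<forall>i\<in>A'. d i * x' i - (\<Sum>l\<in>A'-{i}. M i l * x' l) = b i"
      using less.hyps by blast
    \<comment> \<open>back substitution: row m is the only one that involves the unknown at m\<close>
    define x where "x = x'(m := (b m + (\<Sum>l\<in>A'. M m l * x' l)) / d m)"
    have "d i * x i - (\<Sum>l\<in>A-{i}. M i l * x l) = b i" if i: "i \<in> A" for i
    proof (cases "i = m")
      case True
      have "(\<Sum>l\<in>A-{i}. M i l * x l) = (\<Sum>l\<in>A'. M m l * x' l)"
        unfolding A'_def True x_def by (rule sum.cong) auto
      then show ?thesis using True less.prems(3) m(1) unfolding x_def by (simp add: field_simps)
    next
      case False
      have "M i m = 0" using less.prems(2) i m False unfolding triangular_on_def by (meson not_less)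
      moreover have "A - {i} = insert m (A' - {i})" using i m(1) False unfolding A'_def by auto
      moreover have "(\<Sum>l\<in>A'-{i}. M i l * x l) = (\<Sum>l\<in>A'-{i}. M i l * x' l)"
        unfolding x_def A'_def by (rule sum.cong) auto
      ultimately show ?thesis
        using x' i False \<open>finite A'\<close> unfolding x_def A'_def by simp
    qed
    then show ?thesis by blast
  qed simp
qed

lemma eigenvalue_on_triangular_is_diagonal:
  assumes "finite A" "triangular_on A g M" "c \<in> eigenvalues_on A M"
  shows "\<exists>i\<in>A. c = complex_of_real (M i i)"
proof -
  obtain v where v: "\<exists>i\<in>A. v i \<noteq> 0"
    "\<forall>i\<in>A. (\<Sum>j\<in>A. complex_of_real (M i j) * v j) = c * v i"
    using assms(3) unfolding eigenvalues_on_def by blast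
  \<comment> \<open>read off the row of a fittest state in the support of the eigenvector\<close>
  define B where "B = {i\<in>A. v i \<noteq> 0}"
  have "finite B" "B \<noteq> {}" using assms(1) v(1) unfolding B_def by auto
  then obtain i where i: "i \<in> B" "g i = Max (g ` B)"
    by (metis (mono_tags, lifting) Max_in finite_imageI image_iff image_is_empty)
  have iA: "i \<in> A" and vi: "v i \<noteq> 0" using i(1) unfolding B_def by auto
  have "c * v i = (\<Sum>j\<in>A. complex_of_real (M i j) * v j)" using v(2) iA by simp
  also have "\<dots> = complex_of_real (M i i) * v i + (\<Sum>j\<in>A-{i}. complex_of_real (M i j) * v j)"
    by (rule sum.remove[OF assms(1) iA])
  also have "(\<Sum>j\<in>A-{i}. complex_of_real (M i j) * v j) = 0"
  proof (rule sum.neutral, rule ballI)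
    fix j assume j: "j \<in> A - {i}"
    show "complex_of_real (M i j) * v j = 0"
    proof (cases "M i j = 0")
      case False
      then have "g i < g j" using assms(2) iA j unfolding triangular_on_def by auto
      then have "j \<notin> B" using i \<open>finite B\<close> by (metis Max_ge finite_imageI image_eqI not_le)
      then show ?thesis using j unfolding B_def by auto
    qed simp
  qed
  finally have "c * v i = complex_of_real (M i i) * v i" by simp
  then show ?thesis using iA vi by auto
qed

lemma diagonal_mem_eigenvalues_on_triangular:
  fixes M :: "'a \<Rightarrow> 'a \<Rightarrow> real"
  assumes "finite A" "triangular_on A g M" "x \<in> A"
  shows "complex_of_real (M x x) \<in> eigenvalues_on A M"
proof -
  define \<mu> where "\<mu> = M x x"
  \<comment> \<open>the eigenvector is supported on y and on the states below y, where \<open>\<mu>\<close> is not a diagonal entry\<close>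
  obtain y where y: "y \<in> A" "M y y = \<mu>" "\<And>j. j \<in> A \<Longrightarrow> M j j = \<mu> \<Longrightarrow> g y \<le> g j"
    using ex_is_arg_min_if_finite[of "{j\<in>A. M j j = \<mu>}" g] assms
    unfolding is_arg_min_linorder \<mu>_def by force
  define B where "B = {j\<in>A. g j < g y}"
  have fB: "finite B" and yB: "y \<notin> B" and BA: "B \<subseteq> A"
    using assms(1) unfolding B_def by auto
  have "\<forall>j\<in>B. \<mu> - M j j \<noteq> 0" using y(3) unfolding B_def by force
  moreover have "triangular_on B g M" using assms(2) BA by (rule triangular_on_subset)
  ultimately obtain w where w: "\<forall>i\<in>B. (\<mu> - M i i) * w i - (\<Sum>l\<in>B-{i}. M i l * w l) = M i y"
    using triangular_on_solvable[OF fB, of g M "\<lambda>i. \<mu> - M i i" "\<lambda>i. M i y"] by blast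
  define v where "v j = (if j = y then 1 else if j \<in> B then w j else 0)" for j
  have Mv: "(\<Sum>j\<in>A. M i j * v j) = M i y + (\<Sum>j\<in>B. M i j * w j)" for i
  proof -
    have "(\<Sum>j\<in>A. M i j * v j) = (\<Sum>j\<in>insert y B. M i j * v j)"
      by (rule sum.mono_neutral_right) (use assms(1) y(1) BA in \<open>auto simp: v_def\<close>)
    also have "\<dots> = M i y + (\<Sum>j\<in>B. M i j * w j)"
      using fB yB by (simp add: v_def) (rule sum.cong, auto)
    finally show ?thesis .
  qed
  have "(\<Sum>j\<in>A. M i j * v j) = \<mu> * v i" if i: "i \<in> A" for i
  proof (cases "i \<in> B")
    case True
    have "(\<Sum>j\<in>B. M i j * w j) = M i i * w i + (\<Sum>j\<in>B-{i}. M i j * w j)"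
      using True fB by (simp add: sum.remove)
    then show ?thesis using Mv[of i] w True yB unfolding v_def by (auto simp: algebra_simps)
  next
    case False
    then have "g y \<le> g i" using i unfolding B_def by auto
    then have "M i j = 0" if "j \<in> insert y B - {i}" for j
      using assms(2) i y(1) BA that unfolding triangular_on_def B_def by fastforce
    then have "(\<Sum>j\<in>B. M i j * w j) = 0" and "i \<noteq> y \<Longrightarrow> M i y = 0"
      using False by (force intro: sum.neutral)+
    then show ?thesis using Mv[of i] y(2) False unfolding v_def by auto
  qed
  then have "\<forall>i\<in>A. (\<Sum>j\<in>A. complex_of_real (M i j) * complex_of_real (v j))
      = complex_of_real \<mu> * complex_of_real (v i)"
    by (simp flip: of_real_mult of_real_sum)
  moreover have "complex_of_real (v y) \<noteq> 0" unfolding v_def by simp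
  ultimately show ?thesis using y(1) unfolding eigenvalues_on_def \<mu>_def
    by (intro CollectI exI[of _ "\<lambda>j. complex_of_real (v j)"]) blast
qed

lemma eigenvalues_on_triangular:
  assumes "finite A" "triangular_on A g M"
  shows "eigenvalues_on A M = (\<lambda>i. complex_of_real (M i i)) ` A"
  using eigenvalue_on_triangular_is_diagonal[OF assms] diagonal_mem_eigenvalues_on_triangular[OF assms]
  by blast

lemma spectral_radius_on_triangular:
  assumes "finite A" "triangular_on A g M"
  shows "spectral_radius_on A M = Max ((\<lambda>i. \<bar>M i i\<bar>) ` A)"
  unfolding spectral_radius_on_def eigenvalues_on_triangular[OF assms] image_image by simp

lemma spectral_radius_on_triangular_nonneg:
  assumes "finite A" "triangular_on A g M" "\<forall>i\<in>A. 0 \<le> M i i"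
  shows "spectral_radius_on A M = Max ((\<lambda>i. M i i) ` A)"
  unfolding spectral_radius_on_triangular[OF assms(1,2)] using assms(3)
  by (metis (no_types, lifting) abs_of_nonneg image_cong)

lemma sum_I_minus_mult:
  fixes M :: "'a \<Rightarrow> 'a \<Rightarrow> 'b::comm_ring_1"
  assumes "finite A" "i \<in> A"
  shows "(\<Sum>l\<in>A. ((if i = l then 1 else 0) - M i l) * x l) = x i - (\<Sum>l\<in>A. M i l * x l)"
proof -
  have "(\<Sum>l\<in>A. ((if i = l then 1 else 0) - M i l) * x l)
      = (\<Sum>l\<in>A. if i = l then x l else 0) - (\<Sum>l\<in>A. M i l * x l)"
    unfolding sum_subtractf[symmetric] by (rule sum.cong) (auto simp: left_diff_distrib)
  then show ?thesis using assms by simp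
qed

lemma I_minus_triangular_solvable:
  fixes M :: "'a \<Rightarrow> 'a \<Rightarrow> real"
  assumes "finite A" "triangular_on A g M" "\<forall>i\<in>A. M i i \<noteq> 1"
  shows "\<exists>x. \<forall>i\<in>A. x i - (\<Sum>l\<in>A. M i l * x l) = b i"
proof -
  obtain x where x: "\<forall>i\<in>A. (1 - M i i) * x i - (\<Sum>l\<in>A-{i}. M i l * x l) = b i"
    using triangular_on_solvable[OF assms(1,2), of "\<lambda>i. 1 - M i i" b] assms(3) by auto
  have "x i - (\<Sum>l\<in>A. M i l * x l) = b i" if "i \<in> A" for i
    using x that assms(1) by (simp add: sum.remove algebra_simps)
  then show ?thesis by blast
qed

lemma inv_I_minus_on_triangular:
  fixes M :: "'a \<Rightarrow> 'a \<Rightarrow> real"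
  assumes "finite A" "triangular_on A g M" "\<forall>i\<in>A. M i i \<noteq> 1" "i \<in> A" "j \<in> A"
  shows "(\<Sum>l\<in>A. ((if i = l then 1 else 0) - M i l) * inv_I_minus_on A M l j)
    = (if i = j then 1 else 0)"
proof -
  have "\<forall>j. \<exists>x. \<forall>i\<in>A. x i - (\<Sum>l\<in>A. M i l * x l) = (if i = j then 1 else 0)"
    by (intro allI I_minus_triangular_solvable[OF assms(1-3)])
  from choice[OF this] obtain X
    where "\<forall>j. \<forall>i\<in>A. X j i - (\<Sum>l\<in>A. M i l * X j l) = (if i = j then 1 else 0)"
    by blast
  then have "\<forall>i\<in>A. \<forall>j\<in>A. (\<Sum>l\<in>A. ((if i = l then 1 else 0) - M i l) * X j l)
      = (if i = j then 1 else 0)"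
    by (simp add: sum_I_minus_mult[OF assms(1)])
  then have "\<forall>i\<in>A. \<forall>j\<in>A. (\<Sum>l\<in>A. ((if i = l then 1 else 0) - M i l) * inv_I_minus_on A M l j)
      = (if i = j then 1 else 0)"
    unfolding inv_I_minus_on_def by (rule someI[where x="\<lambda>l j. X j l"])
  then show ?thesis using assms(4,5) by blast
qed

lemma I_minus_inv_I_minus_on_apply:
  fixes M :: "'a \<Rightarrow> 'a \<Rightarrow> real" and v :: "'a \<Rightarrow> complex"
  assumes "finite A" "triangular_on A g M" "\<forall>i\<in>A. M i i \<noteq> 1" "i \<in> A"
  defines "w \<equiv> \<lambda>l. \<Sum>j\<in>A. complex_of_real (inv_I_minus_on A M l j) * v j"
  shows "w i - (\<Sum>l\<in>A. complex_of_real (M i l) * w l) = v i"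
proof -
  let ?E = "\<lambda>l. (if i = l then 1 else 0) - M i l"
  have "complex_of_real (?E l) = (if i = l then 1 else 0) - complex_of_real (M i l)" for l
    by simp
  then have "w i - (\<Sum>l\<in>A. complex_of_real (M i l) * w l)
      = (\<Sum>l\<in>A. complex_of_real (?E l) * w l)"
    using sum_I_minus_mult[OF assms(1,4), of "\<lambda>i l. complex_of_real (M i l)" w] by presburger
  also have "\<dots> = (\<Sum>j\<in>A. complex_of_real (\<Sum>l\<in>A. ?E l * inv_I_minus_on A M l j) * v j)"
    unfolding w_def sum_distrib_left sum_distrib_right of_real_sum
    by (subst sum.swap) (simp add: mult.assoc)
  also have "\<dots> = (\<Sum>j\<in>A. if i = j then v j else 0)"
    using inv_I_minus_on_triangular[OF assms(1-4)] by (intro sum.cong) auto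
  also have "\<dots> = v i" using assms(1,4) by simp
  finally show ?thesis .
qed

lemma eigenvalue_on_inv_I_minus_triangular:
  fixes M :: "'a \<Rightarrow> 'a \<Rightarrow> real"
  assumes fA: "finite A" and tA: "triangular_on A g M" and d1: "\<forall>i\<in>A. M i i \<noteq> 1"
    and c: "c \<in> eigenvalues_on A (inv_I_minus_on A M)"
  shows "\<exists>i\<in>A. c = complex_of_real (1 / (1 - M i i))"
proof -
  obtain v where v: "\<exists>i\<in>A. v i \<noteq> 0"
    "\<forall>i\<in>A. (\<Sum>j\<in>A. complex_of_real (inv_I_minus_on A M i j) * v j) = c * v i"
    using c unfolding eigenvalues_on_def by blast
  \<comment> \<open>apply \<open>I - M\<close> to \<open>N v = c v\<close>\<close>
  have e: "c * v i - c * (\<Sum>l\<in>A. complex_of_real (M i l) * v l) = v i" if i: "i \<in> A" for i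
  proof -
    have "(\<Sum>l\<in>A. complex_of_real (M i l) * (\<Sum>j\<in>A. complex_of_real (inv_I_minus_on A M l j) * v j))
        = c * (\<Sum>l\<in>A. complex_of_real (M i l) * v l)"
      using v(2) by (simp add: sum_distrib_left mult.left_commute)
    then show ?thesis using I_minus_inv_I_minus_on_apply[OF fA tA d1 i, of v] v(2) i by simp
  qed
  have c0: "c \<noteq> 0"
  proof
    assume "c = 0"
    then show False using v(1) e by simp
  qed
  have "(\<Sum>l\<in>A. complex_of_real (M i l) * v l) = (1 - 1 / c) * v i" if "i \<in> A" for i
    using e[OF that] c0 by (simp add: field_simps)
  then have "1 - 1 / c \<in> eigenvalues_on A M" using v(1) unfolding eigenvalues_on_def by blast
  then obtain i where "i \<in> A" "1 - 1 / c = complex_of_real (M i i)"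
    using eigenvalue_on_triangular_is_diagonal[OF fA tA] by blast
  moreover from this have "c = 1 / (1 - complex_of_real (M i i))"
    using c0 d1 by (auto simp: field_simps)
  ultimately show ?thesis by auto
qed

lemma diagonal_mem_eigenvalues_on_inv_I_minus_triangular:
  fixes M :: "'a \<Rightarrow> 'a \<Rightarrow> real"
  assumes fA: "finite A" and tA: "triangular_on A g M" and d1: "\<forall>i\<in>A. M i i \<noteq> 1"
    and k: "k \<in> A"
  shows "complex_of_real (1 / (1 - M k k)) \<in> eigenvalues_on A (inv_I_minus_on A M)"
proof -
  define m where "m = complex_of_real (M k k)"
  have m1: "1 - m \<noteq> 0" using d1 k unfolding m_def by (metis eq_iff_diff_eq_0 of_real_1 of_real_eq_iff)
  obtain v where v: "\<exists>i\<in>A. v i \<noteq> 0"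
    "\<forall>i\<in>A. (\<Sum>j\<in>A. complex_of_real (M i j) * v j) = m * v i"
    using diagonal_mem_eigenvalues_on_triangular[OF fA tA k] unfolding eigenvalues_on_def m_def
    by blast
  define w where "w l = (\<Sum>j\<in>A. complex_of_real (inv_I_minus_on A M l j) * v j)" for l
  \<comment> \<open>both \<open>w = N v\<close> and \<open>v / (1 - m)\<close> solve \<open>(I - M) x = v\<close>, so their difference \<open>u\<close> is
     a fixed point of \<open>M\<close>; it vanishes because 1 is not an eigenvalue of \<open>M\<close>\<close>
  define u where "u l = w l - v l / (1 - m)" for l
  have "(\<Sum>l\<in>A. complex_of_real (M i l) * u l) = 1 * u i" if i: "i \<in> A" for i
  proof -
    have "(\<Sum>l\<in>A. complex_of_real (M i l) * u l)
        = (\<Sum>l\<in>A. complex_of_real (M i l) * w l) - (\<Sum>l\<in>A. complex_of_real (M i l) * v l) / (1 - m)"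
      unfolding u_def by (simp add: right_diff_distrib sum_subtractf sum_divide_distrib)
    also have "\<dots> = (w i - v i) - m * v i / (1 - m)"
      using I_minus_inv_I_minus_on_apply[OF fA tA d1 i, of v] v(2) i unfolding w_def
      by (simp add: algebra_simps)
    also have "\<dots> = 1 * u i" unfolding u_def using m1 by (simp add: field_simps)
    finally show ?thesis .
  qed
  moreover have "1 \<notin> eigenvalues_on A M"
    using eigenvalue_on_triangular_is_diagonal[OF fA tA] d1 by (metis of_real_1 of_real_eq_iff)
  ultimately have "\<forall>i\<in>A. u i = 0" unfolding eigenvalues_on_def by blast
  then have "\<forall>i\<in>A. (\<Sum>j\<in>A. complex_of_real (inv_I_minus_on A M i j) * v j)
      = complex_of_real (1 / (1 - M k k)) * v i"
    unfolding u_def w_def m_def by simp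
  then show ?thesis using v(1) unfolding eigenvalues_on_def by blast
qed

lemma eigenvalues_on_inv_I_minus_triangular:
  assumes "finite A" "triangular_on A g M" "\<forall>i\<in>A. M i i \<noteq> 1"
  shows "eigenvalues_on A (inv_I_minus_on A M) = (\<lambda>i. complex_of_real (1 / (1 - M i i))) ` A"
  using eigenvalue_on_inv_I_minus_triangular[OF assms]
    diagonal_mem_eigenvalues_on_inv_I_minus_triangular[OF assms]
  by blast

lemma spectral_radius_on_inv_I_minus_triangular:
  assumes fA: "finite A" and nA: "A \<noteq> {}" and tA: "triangular_on A g M"
    and nonneg: "\<forall>i\<in>A. 0 \<le> M i i" and lt1: "spectral_radius_on A M < 1"
  shows "spectral_radius_on A (inv_I_minus_on A M) = 1 / (1 - spectral_radius_on A M)"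
proof -
  let ?\<rho> = "spectral_radius_on A M"
  have \<rho>: "?\<rho> = Max ((\<lambda>i. M i i) ` A)"
    by (rule spectral_radius_on_triangular_nonneg[OF fA tA nonneg])
  then have le: "M i i \<le> ?\<rho>" if "i \<in> A" for i using fA that by simp
  obtain j where j: "j \<in> A" "M j j = ?\<rho>"
    using \<rho> fA nA by (metis (no_types, lifting) Max_in finite_imageI image_iff image_is_empty)
  have d1: "\<forall>i\<in>A. M i i \<noteq> 1" using le lt1 by fastforce
  have "\<bar>1 / (1 - M i i)\<bar> = 1 / (1 - M i i)" "1 / (1 - M i i) \<le> 1 / (1 - ?\<rho>)" if "i \<in> A" for i
    using le[OF that] lt1 by (auto intro: frac_le)
  then have "Max ((\<lambda>i. \<bar>1 / (1 - M i i)\<bar>) ` A) = 1 / (1 - ?\<rho>)"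
    using fA j by (intro Max_eqI) (auto simp del: abs_divide intro!: image_eqI[of _ _ j])
  then show ?thesis
    unfolding spectral_radius_on_def eigenvalues_on_inv_I_minus_triangular[OF fA tA d1] image_image
    by (simp del: of_real_divide of_real_diff add: norm_of_real)
qed

lemma triangular_on_ea_trans: "triangular_on A f (\<lambda>x y. ea_trans f (P x) x y)"
  unfolding triangular_on_def ea_trans_def by auto

lemma ea_trans_diag_bounds:
  fixes f :: "'a::finite \<Rightarrow> real"
  assumes "stochastic P"
  shows "0 \<le> ea_trans f P x x" "ea_trans f P x x \<le> 1"
proof -
  have nonneg: "\<forall>y. 0 \<le> P x y" and "(\<Sum>y\<in>UNIV. P x y) = 1"
    using assms unfolding stochastic_def by auto
  moreover have "(\<Sum>z\<in>{z. f z > f x}. P x z) \<le> (\<Sum>y\<in>UNIV. P x y)"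
    by (rule sum_mono2) (use nonneg in auto)
  ultimately show "0 \<le> ea_trans f P x x" "ea_trans f P x x \<le> 1"
    unfolding ea_trans_def by (auto intro: sum_nonneg)
qed

lemma asym_rate_less:
  assumes "0 \<le> spectral_radius_on (S_non f) P"
    and "spectral_radius_on (S_non f) P < spectral_radius_on (S_non f) P'"
  shows "asym_rate f P' < asym_rate f P"
  using assms unfolding asym_rate_def Let_def by auto

lemma asym_hitting_time_triangular:
  fixes f :: "'a::finite \<Rightarrow> real"
  assumes "S_non f \<noteq> {}" "triangular_on (S_non f) g P" "\<forall>x\<in>S_non f. 0 \<le> P x x"
  shows "asym_hitting_time f P = (if spectral_radius_on (S_non f) P < 1
    then ereal (1 / (1 - spectral_radius_on (S_non f) P)) else \<infinity>)"
  using spectral_radius_on_inv_I_minus_triangular[OF _ assms] unfolding asym_hitting_time_def by simp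

lemma asym_hitting_time_less:
  fixes f :: "'a::finite \<Rightarrow> real"
  assumes "S_non f \<noteq> {}"
    and "triangular_on (S_non f) g P" "\<forall>x\<in>S_non f. 0 \<le> P x x"
    and "triangular_on (S_non f) g' P'" "\<forall>x\<in>S_non f. 0 \<le> P' x x"
    and "spectral_radius_on (S_non f) P < spectral_radius_on (S_non f) P'"
    and "spectral_radius_on (S_non f) P' \<le> 1"
  shows "asym_hitting_time f P < asym_hitting_time f P'"
  using assms(6,7)
  unfolding asym_hitting_time_triangular[OF assms(1-3)] asym_hitting_time_triangular[OF assms(1,4,5)]
  by (auto intro: divide_strict_left_mono)

lemma spectral_radius_on_ea_trans:
  fixes f :: "'a::finite \<Rightarrow> real"
  assumes "\<And>x. stochastic (P x)"
  shows "spectral_radius_on A (\<lambda>x y. ea_trans f (P x) x y) = Max ((\<lambda>x. ea_trans f (P x) x x) ` A)"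
  using spectral_radius_on_triangular_nonneg[OF _ triangular_on_ea_trans[of A f P]]
    ea_trans_diag_bounds(1)[OF assms]
  by simp

lemma asym_rate_hitting_time_ea_trans_less:
  fixes f :: "'a::finite \<Rightarrow> real"
  assumes nonempty: "S_non f \<noteq> {}" and P: "\<And>x. stochastic (P x)" and P': "\<And>x. stochastic (P' x)"
    and less: "spectral_radius_on (S_non f) (\<lambda>x y. ea_trans f (P x) x y)
      < spectral_radius_on (S_non f) (\<lambda>x y. ea_trans f (P' x) x y)"
  shows "asym_rate f (\<lambda>x y. ea_trans f (P' x) x y) < asym_rate f (\<lambda>x y. ea_trans f (P x) x y)"
    and "asym_hitting_time f (\<lambda>x y. ea_trans f (P x) x y)
      < asym_hitting_time f (\<lambda>x y. ea_trans f (P' x) x y)"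
proof -
  have "0 \<le> spectral_radius_on (S_non f) (\<lambda>x y. ea_trans f (P x) x y)"
    using nonempty ea_trans_diag_bounds(1)[OF P]
    by (auto simp: spectral_radius_on_ea_trans[OF P] Max_ge_iff ex_in_conv[symmetric])
  then show "asym_rate f (\<lambda>x y. ea_trans f (P' x) x y) < asym_rate f (\<lambda>x y. ea_trans f (P x) x y)"
    using less by (rule asym_rate_less)
  have "spectral_radius_on (S_non f) (\<lambda>x y. ea_trans f (P' x) x y) \<le> 1"
    using nonempty ea_trans_diag_bounds(2)[OF P'] by (simp add: spectral_radius_on_ea_trans[OF P'])
  then show "asym_hitting_time f (\<lambda>x y. ea_trans f (P x) x y)
      < asym_hitting_time f (\<lambda>x y. ea_trans f (P' x) x y)"
    using asym_hitting_time_less[OF nonempty triangular_on_ea_trans _ triangular_on_ea_trans _ less]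
      ea_trans_diag_bounds(1)[OF P] ea_trans_diag_bounds(1)[OF P']
    by blast
qed

lemma complementary_choice:
  fixes \<kappa> :: nat and d :: "nat \<Rightarrow> 'a \<Rightarrow> 'b::linorder"
  assumes "\<kappa> \<ge> 1"
    and "\<And>x l. x \<in> X \<Longrightarrow> l < \<kappa> \<Longrightarrow> d l x \<ge> r \<Longrightarrow> \<exists>k<\<kappa>. k \<noteq> l \<and> d k x < r"
  shows "\<exists>c. \<forall>x. c x < \<kappa> \<and> (x \<in> X \<longrightarrow> d (c x) x < r)"
proof -
  have "\<exists>k<\<kappa>. x \<in> X \<longrightarrow> d k x < r" for x
  proof (cases "x \<in> X \<and> r \<le> d 0 x")
    case True
    then show ?thesis using assms by auto
  next
    case False
    then show ?thesis using assms(1) by (auto simp: not_le intro!: exI[of _ 0])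
  qed
  then have "\<forall>x. \<exists>k. k < \<kappa> \<and> (x \<in> X \<longrightarrow> d k x < r)" by blast
  then show ?thesis by (rule choice)
qed

definition deterministic_strategy :: "('a \<Rightarrow> nat) \<Rightarrow> 'a \<Rightarrow> nat \<Rightarrow> real" where
  "deterministic_strategy c x k = of_bool (k = c x)"

lemma strategy_distribution_deterministic:
  assumes "\<And>x. c x < \<kappa>"
  shows "strategy_distribution \<kappa> (deterministic_strategy c)"
proof -
  have "{..<\<kappa>} \<inter> {k. k = c x} = {c x}" for x using assms by auto
  then show ?thesis unfolding strategy_distribution_def deterministic_strategy_def by simp
qed

lemma mixed_trans_deterministic:
  assumes "\<And>x. c x < \<kappa>"
  shows "mixed_trans f \<kappa> Pm (deterministic_strategy c) = (\<lambda>x y. ea_trans f (Pm (c x)) x y)"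
proof -
  have "{..<\<kappa>} \<inter> {k. k = c x} = {c x}" for x using assms by auto
  then show ?thesis unfolding mixed_trans_def deterministic_strategy_def by (simp add: fun_eq_iff)
qed

theorem theorem4:
  fixes f :: "'a::finite \<Rightarrow> real"
    and \<kappa> :: nat
    and Pm :: "nat \<Rightarrow> 'a \<Rightarrow> 'a \<Rightarrow> real"
  assumes nonempty: "S_non f \<noteq> {}"
    and kappa_pos: "\<kappa> \<ge> 1"
    and mutation: "\<And>k. k < \<kappa> \<Longrightarrow> stochastic (Pm k)"
    and complementary:
      "\<And>x l. x \<in> S_non f \<Longrightarrow> l < \<kappa> \<Longrightarrow>
         ea_trans f (Pm l) x x \<ge> (MIN k\<in>{..<\<kappa>}. spectral_radius_on (S_non f) (ea_trans f (Pm k))) \<Longrightarrow>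
         (\<exists>k<\<kappa>. k \<noteq> l \<and>
            ea_trans f (Pm k) x x < (MIN k\<in>{..<\<kappa>}. spectral_radius_on (S_non f) (ea_trans f (Pm k))))"
  shows "\<exists>q. strategy_distribution \<kappa> q \<and>
           (\<forall>k<\<kappa>. asym_rate f (mixed_trans f \<kappa> Pm q) > asym_rate f (ea_trans f (Pm k)) \<and>
                    asym_hitting_time f (mixed_trans f \<kappa> Pm q) < asym_hitting_time f (ea_trans f (Pm k)))"
proof -
  let ?\<rho> = "spectral_radius_on (S_non f)"
  define \<rho>min where "\<rho>min = (MIN k\<in>{..<\<kappa>}. ?\<rho> (ea_trans f (Pm k)))"
  have "\<exists>c. \<forall>x. c x < \<kappa> \<and> (x \<in> S_non f \<longrightarrow> ea_trans f (Pm (c x)) x x < \<rho>min)"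
    unfolding \<rho>min_def
    by (rule complementary_choice[where d="\<lambda>l x. ea_trans f (Pm l) x x", OF kappa_pos complementary])
  then obtain c where c: "\<And>x. c x < \<kappa>" "\<And>x. x \<in> S_non f \<Longrightarrow> ea_trans f (Pm (c x)) x x < \<rho>min"
    by blast
  have "?\<rho> (\<lambda>x y. ea_trans f (Pm (c x)) x y) = Max ((\<lambda>x. ea_trans f (Pm (c x)) x x) ` S_non f)"
    using mutation[OF c(1)] by (rule spectral_radius_on_ea_trans)
  also have "\<dots> < \<rho>min" using nonempty c(2) by simp
  finally have "?\<rho> (\<lambda>x y. ea_trans f (Pm (c x)) x y) < \<rho>min" .
  moreover have "\<rho>min \<le> ?\<rho> (ea_trans f (Pm k))" if "k < \<kappa>" for k
    unfolding \<rho>min_def using that by simp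
  ultimately have less: "?\<rho> (\<lambda>x y. ea_trans f (Pm (c x)) x y) < ?\<rho> (\<lambda>x y. ea_trans f (Pm k) x y)"
    if "k < \<kappa>" for k
    using that by fastforce
  show ?thesis
  proof (intro exI[of _ "deterministic_strategy c"] conjI allI impI)
    show "strategy_distribution \<kappa> (deterministic_strategy c)"
      using c(1) by (rule strategy_distribution_deterministic)
    fix k assume "k < \<kappa>"
    note asym_rate_hitting_time_ea_trans_less[OF nonempty mutation[OF c(1)] mutation[OF \<open>k < \<kappa>\<close>]
        less[OF \<open>k < \<kappa>\<close>]]
    then show "asym_rate f (ea_trans f (Pm k)) < asym_rate f (mixed_trans f \<kappa> Pm (deterministic_strategy c))"
      and "asym_hitting_time f (mixed_trans f \<kappa> Pm (deterministic_strategy c))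
        < asym_hitting_time f (ea_trans f (Pm k))"
      unfolding mixed_trans_deterministic[OF c(1)] by simp_all
  qed
qed

end
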